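(* The edge set of the complete graph $K_{16}$ can be partitioned into five subgraphs each isomorphic to $P_4 \square P_4$.
   Context: $P_n$ denotes the path graph on $n$ vertices and $K_m$ the complete graph on $m$ vertices. For graphs $G=(V,E)$ and $G'=(V',E')$, the Cartesian product $G \square G'$ has vertex set $V\times V'$, with $\{(v,v'),(w,w')\}$ an edge iff either $\{v,w\}\in E$ and $v'=w'$, or $v=w$ and $\{v',w'\}\in E'$. Thus $P_4\square P_4$ is the $4\times 4$ grid graph with 16 vertices and 24 edges. *)

theory Defs
  imports Main
begin

type_synonym 'a sgraph = "'a set \<times> 'a set set"

definition verts :: "'a sgraph \<Rightarrow> 'a set" where "verts G = fst G"
definition edges :: "'a sgraph \<Rightarrow> 'a set set" where "edges G = snd G"

definition path_graph :: "nat \<Rightarrow> nat sgraph" where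
  "path_graph n = ({0..<n}, {{i, i + 1} | i. i + 1 < n})"

definition complete_graph :: "nat \<Rightarrow> nat sgraph" where
  "complete_graph m = ({0..<m}, {{i, j} | i j. i < m \<and> j < m \<and> i \<noteq> j})"

definition cart_prod :: "'a sgraph \<Rightarrow> 'b sgraph \<Rightarrow> ('a \<times> 'b) sgraph" where
  "cart_prod G H = (verts G \<times> verts H,
     {{(v, v'), (w, w')} | v v' w w'.
        ({v, w} \<in> edges G \<and> v' = w' \<and> v' \<in> verts H) \<or>
        (v = w \<and> v \<in> verts G \<and> {v', w'} \<in> edges H)})"

definition graph_iso :: "'a sgraph \<Rightarrow> 'b sgraph \<Rightarrow> bool" where
  "graph_iso G H \<longleftrightarrow> (\<exists>f. bij_betw f (verts G) (verts H) \<and>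
     (\<forall>u\<in>verts G. \<forall>v\<in>verts G. {u, v} \<in> edges G \<longleftrightarrow> {f u, f v} \<in> edges H))"

definition edge_subgraph :: "'a set set \<Rightarrow> 'a sgraph" where
  "edge_subgraph F = (\<Union>F, F)"

end

theory Submission
  imports Defs
begin

text \<open>
  Let \<open>\<rho>\<close> be the permutation of the vertices \<open>0..15\<close> of \<open>K\<^sub>1\<^sub>6\<close> that fixes 15 and rotates
  each of the blocks \<open>{0..4}\<close>, \<open>{5..9}\<close>, \<open>{10..14}\<close> cyclically. It has order 5 and acts freely
  on the 120 edges, which therefore fall into 24 orbits of size 5. If the 16 vertices are
  labelled by the points of the \<open>4 \<times> 4\<close> grid so that the 24 grid edges meet every orbit exactly
  once, then the grid and its four images under the powers of \<open>\<rho>\<close> partition the edges of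
  \<open>K\<^sub>1\<^sub>6\<close>. Such a labelling exists and is verified by evaluation; \<open>block_rotation k\<close> is \<open>\<rho>\<^sup>k\<close>.
\<close>

lemma verts_path_graph [simp]: "verts (path_graph n) = {0..<n}"
  by (simp add: path_graph_def verts_def)

lemma verts_cart_prod [simp]: "verts (cart_prod G H) = verts G \<times> verts H"
  by (simp add: cart_prod_def verts_def)

lemma verts_edge_subgraph [simp]: "verts (edge_subgraph F) = \<Union>F"
  by (simp add: edge_subgraph_def verts_def)

lemma edges_edge_subgraph [simp]: "edges (edge_subgraph F) = F"
  by (simp add: edge_subgraph_def edges_def)

lemma doubleton_in_edges_path_graph:
  "{v, w} \<in> edges (path_graph n) \<longleftrightarrow> v < n \<and> w < n \<and> (w = v + 1 \<or> v = w + 1)"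
  by (auto simp: path_graph_def edges_def doubleton_eq_iff)

lemma doubleton_in_edges_cart_prod:
  "{p, q} \<in> edges (cart_prod G H) \<longleftrightarrow>
     ({fst p, fst q} \<in> edges G \<and> snd p = snd q \<and> snd p \<in> verts H) \<or>
     (fst p = fst q \<and> fst p \<in> verts G \<and> {snd p, snd q} \<in> edges H)"
  by (cases p; cases q) (auto simp: cart_prod_def edges_def doubleton_eq_iff insert_commute)

lemma path_graph_no_isolated_vertex:
  assumes "1 < n" and "v \<in> verts (path_graph n)"
  shows "\<exists>w\<in>verts (path_graph n). {v, w} \<in> edges (path_graph n)"
proof (cases "v + 1 < n")
  case True
  then show ?thesis by (intro bexI[of _ "v + 1"]) (auto simp: doubleton_in_edges_path_graph)
next
  case False
  then show ?thesis
    using assms by (intro bexI[of _ "v - 1"]) (auto simp: doubleton_in_edges_path_graph)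
qed

lemma cart_prod_no_isolated_vertex:
  assumes "\<And>x. x \<in> verts G \<Longrightarrow> \<exists>y\<in>verts G. {x, y} \<in> edges G"
    and "p \<in> verts (cart_prod G H)"
  shows "\<exists>q\<in>verts (cart_prod G H). {p, q} \<in> edges (cart_prod G H)"
proof -
  obtain x z where p: "p = (x, z)" "x \<in> verts G" "z \<in> verts H"
    using assms(2) by auto
  obtain y where "y \<in> verts G" "{x, y} \<in> edges G"
    using assms(1)[OF \<open>x \<in> verts G\<close>] by blast
  with p show ?thesis
    by (intro bexI[of _ "(y, z)"]) (auto simp: doubleton_in_edges_cart_prod)
qed

definition grid_adjacent :: "nat \<Rightarrow> nat \<Rightarrow> nat \<times> nat \<Rightarrow> nat \<times> nat \<Rightarrow> bool" where
  "grid_adjacent n m p q \<longleftrightarrow> fst p < n \<and> fst q < n \<and> snd p < m \<and> snd q < m \<and>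
     (fst p = fst q \<and> (snd q = snd p + 1 \<or> snd p = snd q + 1) \<or>
      snd p = snd q \<and> (fst q = fst p + 1 \<or> fst p = fst q + 1))"

lemma doubleton_in_edges_grid:
  "{p, q} \<in> edges (cart_prod (path_graph n) (path_graph m)) \<longleftrightarrow> grid_adjacent n m p q"
  by (auto simp: doubleton_in_edges_cart_prod doubleton_in_edges_path_graph grid_adjacent_def)

definition pullback_edges :: "('a \<Rightarrow> 'b) \<Rightarrow> 'a set \<Rightarrow> 'b set set \<Rightarrow> 'a set set" where
  "pullback_edges f V E = {{u, v} | u v. u \<in> V \<and> v \<in> V \<and> {f u, f v} \<in> E}"

lemma doubleton_in_pullback_edges:
  "{u, v} \<in> pullback_edges f V E \<longleftrightarrow> u \<in> V \<and> v \<in> V \<and> {f u, f v} \<in> E"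
proof
  assume "{u, v} \<in> pullback_edges f V E"
  then obtain u' v' where uv: "{u, v} = {u', v'}" "u' \<in> V" "v' \<in> V" "{f u', f v'} \<in> E"
    unfolding pullback_edges_def by blast
  from uv(1) consider "u = u'" "v = v'" | "u = v'" "v = u'"
    by (auto simp: doubleton_eq_iff)
  then show "u \<in> V \<and> v \<in> V \<and> {f u, f v} \<in> E"
    by cases (use uv in \<open>simp_all add: insert_commute\<close>)
qed (auto simp: pullback_edges_def)

lemma graph_iso_edge_subgraph_pullback_edges:
  assumes bij: "bij_betw f V (verts H)"
    and no_isolated: "\<And>x. x \<in> verts H \<Longrightarrow> \<exists>y\<in>verts H. {x, y} \<in> edges H"
  shows "graph_iso (edge_subgraph (pullback_edges f V (edges H))) H"
proof -
  have "\<Union>(pullback_edges f V (edges H)) \<subseteq> V"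
    by (auto simp: pullback_edges_def)
  moreover have "u \<in> \<Union>(pullback_edges f V (edges H))" if "u \<in> V" for u
  proof -
    obtain y where "y \<in> verts H" "{f u, y} \<in> edges H"
      using no_isolated bij_betwE[OF bij] \<open>u \<in> V\<close> by blast
    moreover obtain v where "v \<in> V" "y = f v"
      using bij_betw_imp_surj_on[OF bij] \<open>y \<in> verts H\<close> by blast
    ultimately have "{u, v} \<in> pullback_edges f V (edges H)"
      using \<open>u \<in> V\<close> by (simp add: doubleton_in_pullback_edges)
    then show ?thesis by blast
  qed
  ultimately have "\<Union>(pullback_edges f V (edges H)) = V" by blast
  with bij show ?thesis
    unfolding graph_iso_def by (auto simp: doubleton_in_pullback_edges)
qed

text \<open>Bounded quantifiers over \<open>nat\<close> are not executable; in this form \<open>code_simp\<close> decides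
  the finite checks below.\<close>

lemma all_less_iff_list_all_upt: "(\<forall>i<n. P i) \<longleftrightarrow> list_all P [0..<n]"
  by (auto simp: list_all_iff)

lemma ex_less_iff_list_ex_upt: "(\<exists>i<n. P i) \<longleftrightarrow> list_ex P [0..<n]"
  by (auto simp: list_ex_iff)

definition block_rotation :: "nat \<Rightarrow> nat \<Rightarrow> nat" where
  "block_rotation k v = (if v < 15 then 5 * (v div 5) + (v + k) mod 5 else v)"

definition base_label :: "nat \<Rightarrow> nat \<times> nat" where
  "base_label v = [(1,1), (1,0), (3,0), (0,1), (1,3), (1,2), (3,1), (3,3),
                   (3,2), (2,0), (0,0), (2,1), (0,3), (0,2), (2,2), (2,3)] ! v"

definition grid_label :: "nat \<Rightarrow> nat \<Rightarrow> nat \<times> nat" where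
  "grid_label k = base_label \<circ> block_rotation k"

abbreviation grid44 :: "(nat \<times> nat) sgraph" where
  "grid44 \<equiv> cart_prod (path_graph 4) (path_graph 4)"

definition grid_copy :: "nat \<Rightarrow> nat set set" where
  "grid_copy k = pullback_edges (grid_label k) {0..<16} (edges grid44)"

lemma bij_betw_block_rotation: "bij_betw (block_rotation k) {0..<16} {0..<16}"
proof -
  have "block_rotation k = block_rotation (k mod 5)"
    by (simp add: block_rotation_def fun_eq_iff mod_add_right_eq)
  moreover have "\<forall>j<5. bij_betw (block_rotation j) {0..<16} {0..<16}"
    unfolding all_less_iff_list_all_upt block_rotation_def by code_simp
  ultimately show ?thesis by simp
qed

lemma bij_betw_grid_label: "bij_betw (grid_label k) {0..<16} (verts grid44)"
proof -
  have "bij_betw base_label {0..<16} ({0..<4} \<times> {0..<4})"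
    unfolding base_label_def by code_simp
  then show ?thesis
    unfolding grid_label_def using bij_betw_block_rotation by (auto intro: bij_betw_trans)
qed

lemma grid_labels_cover:
  "\<forall>u<16. \<forall>v<16. u \<noteq> v \<longrightarrow> (\<exists>k<5. grid_adjacent 4 4 (grid_label k u) (grid_label k v))"
  unfolding all_less_iff_list_all_upt ex_less_iff_list_ex_upt by code_simp

lemma grid_labels_disjoint:
  "\<forall>k<5. \<forall>l<5. k \<noteq> l \<longrightarrow> (\<forall>u<16. \<forall>v<16.
     \<not> (grid_adjacent 4 4 (grid_label k u) (grid_label k v) \<and>
        grid_adjacent 4 4 (grid_label l u) (grid_label l v)))"
  unfolding all_less_iff_list_all_upt by code_simp

lemma doubleton_in_grid_copy:
  "{u, v} \<in> grid_copy k \<longleftrightarrow> u < 16 \<and> v < 16 \<and> grid_adjacent 4 4 (grid_label k u) (grid_label k v)"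
  by (simp add: grid_copy_def doubleton_in_pullback_edges doubleton_in_edges_grid)

lemma grid_copy_elem:
  assumes "e \<in> grid_copy k"
  obtains u v where "e = {u, v}" "u < 16" "v < 16" "u \<noteq> v"
    "grid_adjacent 4 4 (grid_label k u) (grid_label k v)"
proof -
  obtain u v where uv: "e = {u, v}" "u < 16" "v < 16"
    and adj: "grid_adjacent 4 4 (grid_label k u) (grid_label k v)"
    using assms unfolding grid_copy_def pullback_edges_def
    by (auto simp: doubleton_in_edges_grid)
  moreover have "u \<noteq> v"
    using adj by (auto simp: grid_adjacent_def)
  ultimately show thesis using that by blast
qed

lemma Union_grid_copy: "(\<Union>k<5. grid_copy k) = edges (complete_graph 16)"
proof
  show "(\<Union>k<5. grid_copy k) \<subseteq> edges (complete_graph 16)"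
    by (auto simp: complete_graph_def edges_def elim!: grid_copy_elem)
  show "edges (complete_graph 16) \<subseteq> (\<Union>k<5. grid_copy k)"
    using grid_labels_cover
    by (fastforce simp: complete_graph_def edges_def doubleton_in_grid_copy)
qed

lemma grid_copies_disjoint:
  assumes "k < 5" "l < 5" "k \<noteq> l"
  shows "grid_copy k \<inter> grid_copy l = {}"
proof (rule equals0I)
  fix e assume e: "e \<in> grid_copy k \<inter> grid_copy l"
  then obtain u v where uv: "e = {u, v}" "u < 16" "v < 16"
    and adj_k: "grid_adjacent 4 4 (grid_label k u) (grid_label k v)"
    by (auto elim: grid_copy_elem)
  have adj_l: "grid_adjacent 4 4 (grid_label l u) (grid_label l v)"
    using e uv by (simp add: doubleton_in_grid_copy)
  show False
    using grid_labels_disjoint assms uv(2,3) adj_k adj_l by blast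
qed

lemma graph_iso_grid_copy: "graph_iso (edge_subgraph (grid_copy k)) grid44"
  unfolding grid_copy_def
  using bij_betw_grid_label
  by (rule graph_iso_edge_subgraph_pullback_edges)
    (intro cart_prod_no_isolated_vertex path_graph_no_isolated_vertex; simp)

theorem theorem4:
  shows "\<exists>F :: nat \<Rightarrow> nat set set.
    (\<Union>k<5. F k) = edges (complete_graph 16) \<and>
    (\<forall>k<5. \<forall>l<5. k \<noteq> l \<longrightarrow> F k \<inter> F l = {}) \<and>
    (\<forall>k<5. graph_iso (edge_subgraph (F k))
                      (cart_prod (path_graph 4) (path_graph 4)))"
  by (intro exI[of _ grid_copy])
    (simp add: Union_grid_copy grid_copies_disjoint graph_iso_grid_copy)

end
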